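(* Let $E$ be an arbitrary set and $\mathcal L\subseteq\{+,-,0\}^E$. Then $\mathcal L$ satisfies the four axioms (C) $\mathcal L\circ\mathcal L\subseteq\mathcal L$; (FS) $\mathcal L\circ(-\mathcal L)\subseteq\mathcal L$; (SE$^=$) for all $X,Y\in\mathcal L$ with $\underline X=\underline Y$ and all $e\in S(X,Y)$, $I^=_e(X,Y;\mathcal L)\neq\emptyset$; (P$^=_{\mathrm{asym}}$) $\mathcal P^=_{\mathrm{asym}}(\mathcal L)\circ\mathcal L\subseteq\mathcal L$, if and only if $\mathcal L$ satisfies the three axioms (FS) $\mathcal L\circ(-\mathcal L)\subseteq\mathcal L$; (SE) for all $X,Y\in\mathcal L$ and all $e\in S(X,Y)$, $I_e(X,Y;\mathcal L)\neq\emptyset$; (P) $\mathcal P(\mathcal L)\circ\mathcal L\subseteq\mathcal L$.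
   Context: A sign vector on a set $E$ is an element of $\{+,-,0\}^E$; $-X$ is defined by $(-X)(e)=-X(e)$. The support of $X$ is $\underline X=\{e\in E: X(e)\neq0\}$. The separator of $X,Y$ is $S(X,Y)=\{e\in E: X(e)\neq0\neq Y(e),\ X(e)\neq Y(e)\}$. The composition $X\circ Y$ is given by $(X\circ Y)(e)=X(e)$ if $X(e)\neq0$ and $(X\circ Y)(e)=Y(e)$ otherwise. The sign vector $X\oplus Y$ is $0$ on $S(X,Y)$ and equals $X\circ Y$ elsewhere. For sets $\mathcal A,\mathcal B$ of sign vectors, $\mathcal A\circ\mathcal B=\{X\circ Y:X\in\mathcal A,Y\in\mathcal B\}$ and $-\mathcal A=\{-X:X\in\mathcal A\}$. For $\mathcal L\subseteq\{+,-,0\}^E$, sign vectors $X,Y$ and $e\in E$ put $I_e(X,Y;\mathcal L)=\{Z\in\mathcal L: Z(e)=0,\ Z(f)=(X\circ Y)(f)\ \forall f\notin S(X,Y)\}$, $I(X,Y;\mathcal L)=\bigcup_{e\in S(X,Y)}I_e(X,Y;\mathcal L)$, $I^=_e(X,Y;\mathcal L)=\{Z\in\mathcal L: Z(e)=0,\ Z(f)=X(f)\ \forall f\notin S(X,Y)\}$, $I^=(X,Y;\mathcal L)=\bigcup_{e\in S(X,Y)}I^=_e(X,Y;\mathcal L)$, $\mathrm{Asym}(\mathcal L)=\{X\in\mathcal L:-X\notin\mathcal L\}$, $\mathcal P^=_{\mathrm{asym}}(\mathcal L)=\{X\oplus(-Y): X,Y\in\mathrm{Asym}(\mathcal L),\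 \underline X=\underline Y,\ I^=(X,-Y;\mathcal L)=I^=(-X,Y;\mathcal L)=\emptyset\}$, $\mathcal P(\mathcal L)=\{X\oplus(-Y): X,Y\in\mathcal L,\ I(X,-Y;\mathcal L)=I(-X,Y;\mathcal L)=\emptyset\}$. *)

theory Defs
  imports Main
begin

datatype sign = Pos | Neg | Zero

type_synonym 'e svec = "'e \<Rightarrow> sign"

fun sneg :: "sign \<Rightarrow> sign" where
  "sneg Pos = Neg" | "sneg Neg = Pos" | "sneg Zero = Zero"

definition vneg :: "'e svec \<Rightarrow> 'e svec" where
  "vneg X = (\<lambda>e. sneg (X e))"

definition supp :: "'e svec \<Rightarrow> 'e set" where
  "supp X = {e. X e \<noteq> Zero}"

definition sep :: "'e svec \<Rightarrow> 'e svec \<Rightarrow> 'e set" where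
  "sep X Y = {e. X e \<noteq> Zero \<and> Y e \<noteq> Zero \<and> X e \<noteq> Y e}"

definition comp :: "'e svec \<Rightarrow> 'e svec \<Rightarrow> 'e svec" where
  "comp X Y = (\<lambda>e. if X e \<noteq> Zero then X e else Y e)"

definition osum :: "'e svec \<Rightarrow> 'e svec \<Rightarrow> 'e svec" where
  "osum X Y = (\<lambda>e. if e \<in> sep X Y then Zero else comp X Y e)"

definition setcomp :: "'e svec set \<Rightarrow> 'e svec set \<Rightarrow> 'e svec set" where
  "setcomp A B = {comp X Y | X Y. X \<in> A \<and> Y \<in> B}"

definition setneg :: "'e svec set \<Rightarrow> 'e svec set" where
  "setneg A = vneg ` A"

definition Ie :: "'e \<Rightarrow> 'e svec \<Rightarrow> 'e svec \<Rightarrow> 'e svec set \<Rightarrow> 'e svec set" where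
  "Ie e X Y L = {Z \<in> L. Z e = Zero \<and> (\<forall>f. f \<notin> sep X Y \<longrightarrow> Z f = comp X Y f)}"

definition I :: "'e svec \<Rightarrow> 'e svec \<Rightarrow> 'e svec set \<Rightarrow> 'e svec set" where
  "I X Y L = (\<Union>e\<in>sep X Y. Ie e X Y L)"

definition Ie_eq :: "'e \<Rightarrow> 'e svec \<Rightarrow> 'e svec \<Rightarrow> 'e svec set \<Rightarrow> 'e svec set" where
  "Ie_eq e X Y L = {Z \<in> L. Z e = Zero \<and> (\<forall>f. f \<notin> sep X Y \<longrightarrow> Z f = X f)}"

definition I_eq :: "'e svec \<Rightarrow> 'e svec \<Rightarrow> 'e svec set \<Rightarrow> 'e svec set" where
  "I_eq X Y L = (\<Union>e\<in>sep X Y. Ie_eq e X Y L)"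

definition Asym :: "'e svec set \<Rightarrow> 'e svec set" where
  "Asym L = {X \<in> L. vneg X \<notin> L}"

definition P_eq_asym :: "'e svec set \<Rightarrow> 'e svec set" where
  "P_eq_asym L = {osum X (vneg Y) | X Y. X \<in> Asym L \<and> Y \<in> Asym L \<and> supp X = supp Y
      \<and> I_eq X (vneg Y) L = {} \<and> I_eq (vneg X) Y L = {}}"

definition P :: "'e svec set \<Rightarrow> 'e svec set" where
  "P L = {osum X (vneg Y) | X Y. X \<in> L \<and> Y \<in> L
      \<and> I X (vneg Y) L = {} \<and> I (vneg X) Y L = {}}"

definition axC :: "'e svec set \<Rightarrow> bool" where
  "axC L \<longleftrightarrow> setcomp L L \<subseteq> L"

definition axFS :: "'e svec set \<Rightarrow> bool" where
  "axFS L \<longleftrightarrow> setcomp L (setneg L) \<subseteq> L"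

definition axSE_eq :: "'e svec set \<Rightarrow> bool" where
  "axSE_eq L \<longleftrightarrow> (\<forall>X\<in>L. \<forall>Y\<in>L. supp X = supp Y \<longrightarrow> (\<forall>e\<in>sep X Y. Ie_eq e X Y L \<noteq> {}))"

definition axP_eq_asym :: "'e svec set \<Rightarrow> bool" where
  "axP_eq_asym L \<longleftrightarrow> setcomp (P_eq_asym L) L \<subseteq> L"

definition axSE :: "'e svec set \<Rightarrow> bool" where
  "axSE L \<longleftrightarrow> (\<forall>X\<in>L. \<forall>Y\<in>L. \<forall>e\<in>sep X Y. Ie e X Y L \<noteq> {})"

definition axP :: "'e svec set \<Rightarrow> bool" where
  "axP L \<longleftrightarrow> setcomp (P L) L \<subseteq> L"

end

theory Submission
  imports Defs
begin

text \<open>Replacing a pair X, Y by X \<circ> Y, Y \<circ> X keeps the separator and the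
composition, hence all the sets I_e, I and the sum X \<oplus> Y, but makes the supports equal,
and for equal supports I_e and I^=_e coincide. With (C) this turns (SE^=) into (SE).
For (P), apply the replacement to X, -Y: if S(X, -Y) is empty then X \<oplus> (-Y) = X \<circ> (-Y)
lies in L by (FS); otherwise (SE) forbids the negatives of the new pair to lie in L
(their separator with the other member is still S(X, -Y)), so X \<oplus> (-Y) is in P^=_asym(L).
Conversely P^=_asym(L) \<subseteq> P(L), and (FS) implies (C) since X \<circ> Y = X \<circ> -(X \<circ> -Y).\<close>

lemma sneg_sneg [simp]: "sneg (sneg a) = a"
  by (cases a) simp_all

lemma sneg_eq_Zero_iff [simp]: "sneg a = Zero \<longleftrightarrow> a = Zero"
  by (cases a) simp_all

lemma vneg_vneg [simp]: "vneg (vneg X) = X"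
  by (simp add: vneg_def)

lemma supp_vneg [simp]: "supp (vneg X) = supp X"
  by (simp add: supp_def vneg_def)

lemma vneg_comp: "vneg (comp X Y) = comp (vneg X) (vneg Y)"
  by (auto simp: vneg_def comp_def)

lemma sep_vneg_left: "sep (vneg X) Y = sep X (vneg Y)"
  unfolding sep_def vneg_def
  by (rule set_eqI, rename_tac e, case_tac "X e"; case_tac "Y e") simp_all

lemma supp_comp_commute: "supp (comp X Y) = supp (comp Y X)"
  by (auto simp: supp_def comp_def)

lemma sep_comp_comp: "sep (comp X Y) (comp Y X) = sep X Y"
  by (auto simp: sep_def comp_def)

lemma comp_comp_comp: "comp (comp X Y) (comp Y X) = comp X Y"
  by (auto simp: comp_def)

lemma osum_comp_comp: "osum (comp X Y) (comp Y X) = osum X Y"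
  unfolding osum_def sep_comp_comp comp_comp_comp ..

lemma Ie_comp_comp: "Ie e (comp X Y) (comp Y X) L = Ie e X Y L"
  by (simp add: Ie_def sep_comp_comp comp_comp_comp)

lemma I_comp_comp: "I (comp X Y) (comp Y X) L = I X Y L"
  by (simp add: I_def sep_comp_comp Ie_comp_comp)

lemma osum_eq_comp: "sep X Y = {} \<Longrightarrow> osum X Y = comp X Y"
  by (simp add: osum_def)

lemma comp_eq_left_off_sep:
  assumes "supp X = supp Y" "f \<notin> sep X Y"
  shows "comp X Y f = X f"
proof -
  have "X f = Zero \<longleftrightarrow> Y f = Zero" using assms(1) by (auto simp: supp_def)
  then show ?thesis using assms(2) by (auto simp: sep_def comp_def)
qed

lemma Ie_eq_Ie_eq: "supp X = supp Y \<Longrightarrow> Ie e X Y L = Ie_eq e X Y L"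
  unfolding Ie_def Ie_eq_def by (simp add: comp_eq_left_off_sep)

lemma I_eq_I_eq: "supp X = supp Y \<Longrightarrow> I X Y L = I_eq X Y L"
  by (simp add: I_def I_eq_def Ie_eq_Ie_eq)

lemma setcomp_subset_iff: "setcomp A B \<subseteq> C \<longleftrightarrow> (\<forall>X\<in>A. \<forall>Y\<in>B. comp X Y \<in> C)"
  unfolding setcomp_def by blast

lemma axFS_iff: "axFS L \<longleftrightarrow> (\<forall>X\<in>L. \<forall>Y\<in>L. comp X (vneg Y) \<in> L)"
  by (auto simp: axFS_def setcomp_subset_iff setneg_def)

lemma axC_iff: "axC L \<longleftrightarrow> (\<forall>X\<in>L. \<forall>Y\<in>L. comp X Y \<in> L)"
  by (simp add: axC_def setcomp_subset_iff)

lemma axFS_imp_axC: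
  assumes "axFS L"
  shows "axC L"
  unfolding axC_iff
proof (intro ballI)
  fix X Y assume "X \<in> L" "Y \<in> L"
  then have "comp X (vneg (comp X (vneg Y))) \<in> L"
    using assms by (simp add: axFS_iff)
  moreover have "comp X (vneg (comp X (vneg Y))) = comp X Y"
    by (auto simp: comp_def vneg_def)
  ultimately show "comp X Y \<in> L" by simp
qed

lemma axSE_imp_axSE_eq: "axSE L \<Longrightarrow> axSE_eq L"
  unfolding axSE_def axSE_eq_def by (metis Ie_eq_Ie_eq)

lemma axSE_eq_imp_axSE:
  assumes "axC L" "axSE_eq L"
  shows "axSE L"
  unfolding axSE_def
proof (intro ballI)
  fix X Y e assume "X \<in> L" "Y \<in> L" "e \<in> sep X Y"
  then have "Ie_eq e (comp X Y) (comp Y X) L \<noteq> {}"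
    using assms supp_comp_commute sep_comp_comp
    unfolding axC_iff axSE_eq_def by metis
  then show "Ie e X Y L \<noteq> {}"
    by (metis Ie_eq_Ie_eq supp_comp_commute Ie_comp_comp)
qed

lemma axSE_sep_empty:
  assumes "axSE L" "X \<in> L" "Y \<in> L" "I X Y L = {}"
  shows "sep X Y = {}"
  using assms unfolding axSE_def I_def by blast

lemma P_eq_asym_subset_P: "P_eq_asym L \<subseteq> P L"
  unfolding P_eq_asym_def P_def Asym_def by (force simp: I_eq_I_eq)

lemma P_subset_L_Un_P_eq_asym:
  assumes fs: "axFS L" and se: "axSE L"
  shows "P L \<subseteq> L \<union> P_eq_asym L"
proof
  fix Z assume "Z \<in> P L"
  then obtain X Y where Z: "Z = osum X (vneg Y)" and "X \<in> L" "Y \<in> L"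
    and I1: "I X (vneg Y) L = {}" and I2: "I (vneg X) Y L = {}"
    unfolding P_def by blast
  define X' where "X' = comp X (vneg Y)"
  define Y' where "Y' = comp Y (vneg X)"
  have "X' \<in> L" "Y' \<in> L"
    using fs \<open>X \<in> L\<close> \<open>Y \<in> L\<close> by (simp_all add: axFS_iff X'_def Y'_def)
  have Y'_neg: "vneg Y' = comp (vneg Y) X" and X'_neg: "vneg X' = comp (vneg X) Y"
    by (simp_all add: X'_def Y'_def vneg_comp)
  have J1: "I X' (vneg Y') L = {}" and J2: "I (vneg X') Y' L = {}"
    using I1 I2 unfolding Y'_neg X'_neg by (simp_all add: X'_def Y'_def I_comp_comp)
  show "Z \<in> L \<union> P_eq_asym L"
  proof (cases "sep X (vneg Y) = {}")
    case True
    then show ?thesis by (simp add: Z osum_eq_comp X'_def [symmetric] \<open>X' \<in> L\<close>)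
  next
    case False
    have "vneg X' \<notin> L"
    proof
      assume "vneg X' \<in> L"
      then have "sep (vneg X') Y' = {}" using axSE_sep_empty [OF se _ \<open>Y' \<in> L\<close> J2] by blast
      then show False
        using False by (simp add: X'_neg Y'_def sep_comp_comp sep_vneg_left)
    qed
    moreover have "vneg Y' \<notin> L"
    proof
      assume "vneg Y' \<in> L"
      then have "sep X' (vneg Y') = {}" using axSE_sep_empty [OF se \<open>X' \<in> L\<close> _ J1] by blast
      then show False
        using False by (simp add: Y'_neg X'_def sep_comp_comp)
    qed
    moreover have "supp X' = supp Y'"
      using supp_comp_commute [of X "vneg Y"] by (simp add: X'_def Y'_neg [symmetric])
    moreover have "Z = osum X' (vneg Y')"
      by (simp add: Z Y'_neg X'_def osum_comp_comp)
    ultimately have "Z \<in> P_eq_asym L"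
      using \<open>X' \<in> L\<close> \<open>Y' \<in> L\<close> J1 J2 unfolding P_eq_asym_def Asym_def
      by (auto simp: I_eq_I_eq)
    then show ?thesis by simp
  qed
qed

lemma axP_imp_axP_eq_asym: "axP L \<Longrightarrow> axP_eq_asym L"
  using P_eq_asym_subset_P unfolding axP_def axP_eq_asym_def setcomp_def by blast

lemma axP_eq_asym_imp_axP:
  assumes "axFS L" "axSE L" "axP_eq_asym L"
  shows "axP L"
  using P_subset_L_Un_P_eq_asym [OF assms(1,2)] assms(3) axFS_imp_axC [OF assms(1)]
  unfolding axP_def axP_eq_asym_def axC_iff setcomp_subset_iff by blast

theorem proposition2p2:
  fixes L :: "'e svec set"
  shows "(axC L \<and> axFS L \<and> axSE_eq L \<and> axP_eq_asym L) \<longleftrightarrow> (axFS L \<and> axSE L \<and> axP L)"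
  using axFS_imp_axC axSE_imp_axSE_eq axSE_eq_imp_axSE axP_imp_axP_eq_asym axP_eq_asym_imp_axP
  by blast

end
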